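(* Let $n\ge3$ and let $x\in B$ with $|x|=2n+9$ and $\delta(x)\ge5$. Then $[x]_2\notin R$.
   Context: Stern's sequence $(a(n))_{n\ge0}$: $a(0)=0$, $a(1)=1$, $a(2n)=a(n)$, $a(2n+1)=a(n)+a(n+1)$; $s(n)=a(n+1)$. $R$ is the set of record-setters of $s$, i.e. indices $v\ge0$ with $s(i)<s(v)$ for all $i<v$. For a binary string $x$, $[x]_2$ is the integer it represents in base 2 and $|x|$ its length. $B$ denotes the set of nonempty binary strings that are concatenations of blocks each equal to $10$ or $100$; for $x\in B$, $\delta(x)$ is the number of $0$s minus the number of $1$s in $x$, which equals the number of $100$ blocks. *)

theory Defs
  imports Main
begin

function stern :: "nat \<Rightarrow> nat" where
  "stern 0 = 0"
| "stern (Suc 0) = 1"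
| "stern (Suc (Suc n)) =
     (if even n then stern (Suc (n div 2))
      else stern (Suc (n div 2)) + stern (Suc (Suc (n div 2))))"
  by pat_completeness auto
termination by (relation "measure id") (auto elim: oddE)

definition s :: "nat \<Rightarrow> nat" where
  "s n = stern (n + 1)"

definition R :: "nat set" where
  "R = {v. \<forall>i<v. s i < s v}"

definition bin_val :: "bool list \<Rightarrow> nat" where
  "bin_val xs = foldl (\<lambda>acc b. 2 * acc + (if b then 1 else 0)) 0 xs"

inductive_set B :: "bool list set" where
  blk10: "[True, False] \<in> B"
| blk100: "[True, False, False] \<in> B"
| app10: "x \<in> B \<Longrightarrow> x @ [True, False] \<in> B"
| app100: "x \<in> B \<Longrightarrow> x @ [True, False, False] \<in> B"

definition delta :: "bool list \<Rightarrow> int" where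
  "delta x = int (length (filter Not x)) - int (length (filter id x))"

end

(*
  Reading a binary string x bit by bit, the pair (a([x]_2), a([x]_2 + 1)) evolves linearly, and
  appending a block 10 resp. 100 maps (a, b) to (a + b, a + 2b) resp. (a + b, 2a + 3b).  The weight
  a + phi b (phi the golden ratio) is multiplied by exactly phi^2 under a 10 block, and by at most
  phi^3 * 2/sqrt 5 under a 100 block, as long as b >= phi a, which every block string satisfies.
  Hence a string of length 2n+9 with at least five 100 blocks has weight, and so s-value, at most
  a constant times phi^(2n+9) * (2/sqrt 5)^5.  The strings (10)^(n+4) and 100(10)^(n+3) have
  smaller binary value than x (depending on whether x starts with 100 or 10) but, by a numerical
  comparison of the two weights, at least the same s-value, so x cannot be a record-setter.
*)

theory Submission
  imports Defs Complex_Main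
begin

lemma stern_double: "stern (2 * m) = stern m"
  by (cases m) auto

lemma stern_double_Suc: "stern (2 * m + 1) = stern m + stern (m + 1)"
  by (cases m) auto

lemma bin_val_Nil [simp]: "bin_val [] = 0"
  by (simp add: bin_val_def)

lemma bin_val_snoc: "bin_val (xs @ [b]) = 2 * bin_val xs + (if b then 1 else 0)"
  by (simp add: bin_val_def)

lemma bin_val_append: "bin_val (xs @ ys) = bin_val xs * 2 ^ length ys + bin_val ys"
  by (induction ys rule: rev_induct) (simp_all add: bin_val_def algebra_simps)

lemma bin_val_less_power: "bin_val xs < 2 ^ length xs"
  by (induction xs rule: rev_induct) (simp_all add: bin_val_snoc)

definition stern_step :: "nat \<times> nat \<Rightarrow> bool \<Rightarrow> nat \<times> nat" where
  "stern_step p d = (if d then (fst p + snd p, snd p) else (fst p, fst p + snd p))"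

definition stern_pair :: "bool list \<Rightarrow> nat \<times> nat" where
  "stern_pair xs = foldl stern_step (0, 1) xs"

lemma stern_pair_eq: "stern_pair xs = (stern (bin_val xs), s (bin_val xs))"
proof (induction xs rule: rev_induct)
  case Nil
  then show ?case by (simp add: stern_pair_def bin_val_def s_def)
next
  case (snoc d xs)
  then show ?case
    using stern_double[of "bin_val xs"] stern_double_Suc[of "bin_val xs"]
      stern_double[of "bin_val xs + 1"]
    by (auto simp: stern_pair_def stern_step_def bin_val_snoc s_def)
qed

lemma stern_pair_append10:
  "stern_pair xs = (a, b) \<Longrightarrow> stern_pair (xs @ [True, False]) = (a + b, a + 2 * b)"
  by (simp add: stern_pair_def stern_step_def)

lemma stern_pair_append100:
  "stern_pair xs = (a, b) \<Longrightarrow> stern_pair (xs @ [True, False, False]) = (a + b, 2 * a + 3 * b)"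
  by (simp add: stern_pair_def stern_step_def)

lemma not_in_R_if_dominated:
  assumes "w < v" and "s v \<le> s w"
  shows "v \<notin> R"
  using assms unfolding R_def by (auto simp: not_less)

subsection \<open>Block strings\<close>

lemma B_Cons_True: "x \<in> B \<Longrightarrow> \<exists>v. x = True # v"
  by (induction rule: B.induct) auto

lemma B_split_first_block:
  assumes "x \<in> B"
  obtains "x = [True, False]" | "x = [True, False, False]"
    | y where "y \<in> B" "x = [True, False] @ y" | y where "y \<in> B" "x = [True, False, False] @ y"
proof -
  have "x = [True, False] \<or> x = [True, False, False]
    \<or> (\<exists>y\<in>B. x = [True, False] @ y \<or> x = [True, False, False] @ y)"
    using assms
  proof (induction rule: B.induct)
    case (app10 x)
    then show ?case by (metis B.intros append_Cons append_Nil)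
  next
    case (app100 x)
    then show ?case by (metis B.intros append_Cons append_Nil)
  qed auto
  then show ?thesis using that by blast
qed

lemma delta_append: "delta (x @ y) = delta x + delta y"
  by (simp add: delta_def)

lemma delta_blocks [simp]: "delta [True, False] = 0" "delta [True, False, False] = 1"
  by (simp_all add: delta_def)

lemma delta_nonneg: "x \<in> B \<Longrightarrow> delta x \<ge> 0"
  by (induction rule: B.induct) (auto simp: delta_def)

lemma B_stern_pair_snd_le: "x \<in> B \<Longrightarrow> snd (stern_pair x) \<le> 3 * fst (stern_pair x)"
  by (induction rule: B.induct) (auto simp: stern_pair_def stern_step_def)

text \<open>Only the last block matters here; it is the source of the constant \<open>4 / 11\<close> below.\<close>

lemma B_stern_pair_ratio:
  assumes "x \<in> B" and "length x \<ge> 4"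
  shows "4 * snd (stern_pair x) \<le> 11 * fst (stern_pair x)"
  using assms
proof (cases rule: B.cases)
  case (app10 y)
  obtain a b where "stern_pair y = (a, b)" by fastforce
  then show ?thesis using app10 by (simp add: stern_pair_append10)
next
  case (app100 y)
  obtain a b where ab: "stern_pair y = (a, b)" by fastforce
  then have "b \<le> 3 * a" using B_stern_pair_snd_le[OF \<open>y \<in> B\<close>] by simp
  then show ?thesis using app100 ab by (simp add: stern_pair_append100)
qed auto

subsection \<open>The golden-ratio weight\<close>

definition phi :: real where
  "phi = (1 + sqrt 5) / 2"

definition rho :: real where
  "rho = 2 / sqrt 5"

definition weight :: "nat \<times> nat \<Rightarrow> real" where
  "weight p = real (fst p) + phi * real (snd p)"

definition golden :: "nat \<times> nat \<Rightarrow> bool" where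
  "golden p \<longleftrightarrow> phi * real (fst p) \<le> real (snd p)"

lemma sqrt5_gt: "11 / 5 < sqrt (5::real)"
  by (rule real_less_rsqrt) (simp add: power2_eq_square)

lemma sqrt5_lt: "sqrt (5::real) < 9 / 4"
  by (rule real_less_lsqrt) (auto simp: power2_eq_square)

lemma phi_pos: "0 < phi"
  unfolding phi_def by (simp add: add_pos_nonneg)

lemma phi_le_2: "phi \<le> 2"
  unfolding phi_def using sqrt5_lt by simp

lemma phi_square: "phi ^ 2 = phi + 1"
  unfolding phi_def by (simp add: power2_eq_square field_simps)

lemma phi_mult_phi_mult: "phi * (phi * x) = phi * x + x"
  using phi_square by (simp add: power2_eq_square algebra_simps flip: mult.assoc)

lemma phi_cube: "phi ^ 3 = 2 * phi + 1"
  unfolding phi_def by (simp add: power3_eq_cube field_simps)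

lemma phi_pow4: "phi ^ 4 = 3 * phi + 2"
proof -
  have "phi ^ 4 = phi ^ 2 * phi ^ 2" by (simp flip: power_add)
  also have "\<dots> = (phi + 1) * (phi + 1)" by (simp add: phi_square)
  finally show ?thesis using phi_square by (simp add: algebra_simps power2_eq_square)
qed

lemma rho_pos: "0 < rho"
  unfolding rho_def by simp

lemma rho_square: "rho ^ 2 = 4 / 5"
  unfolding rho_def by (simp add: power_divide)

lemma rho_pow4: "rho ^ 4 = 16 / 25"
proof -
  have "rho ^ 4 = (rho ^ 2) ^ 2" by (simp flip: power_mult)
  also have "\<dots> = 16 / 25" unfolding rho_square by (simp add: power_divide)
  finally show ?thesis .
qed

lemma sqrt5_mult_rho: "sqrt 5 * rho = 2"
  unfolding rho_def by simp

lemma rho_le_1: "rho \<le> 1"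
  unfolding rho_def using sqrt5_gt by simp

lemma phi_times_phi_minus_1: "phi * (phi - 1) = 1"
  using phi_square by (simp add: power2_eq_square algebra_simps)

lemma golden_iff: "golden p \<longleftrightarrow> real (fst p) \<le> (phi - 1) * real (snd p)"
proof -
  have "phi - 1 > 0" unfolding phi_def using sqrt5_gt by simp
  then have "golden p \<longleftrightarrow> (phi - 1) * (phi * real (fst p)) \<le> (phi - 1) * real (snd p)"
    unfolding golden_def by simp
  also have "(phi - 1) * (phi * real (fst p)) = real (fst p)"
    using phi_times_phi_minus_1 by (metis mult.assoc mult.commute mult_1)
  finally show ?thesis .
qed

lemma golden_step10:
  assumes "golden (a, b)"
  shows "golden (a + b, a + 2 * b)"
proof -
  have "(phi - 1) * real a \<le> (phi - 1) * ((phi - 1) * real b)"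
    using assms phi_times_phi_minus_1 phi_pos unfolding golden_iff
    by (intro mult_left_mono) (auto simp: phi_def)
  also have "\<dots> = (2 - phi) * real b"
    by (simp add: algebra_simps phi_mult_phi_mult)
  finally show ?thesis unfolding golden_def by (simp add: algebra_simps)
qed

lemma golden_step100: "golden (a + b, 2 * a + 3 * b)"
  using mult_right_mono[OF phi_le_2, of "real a"] mult_right_mono[OF phi_le_2, of "real b"]
  unfolding golden_def by (simp add: algebra_simps)

lemma weight_step10: "weight (a + b, a + 2 * b) = phi ^ 2 * weight (a, b)"
  unfolding weight_def phi_square by (simp add: algebra_simps phi_mult_phi_mult)

lemma weight_step100_le:
  assumes "golden (a, b)"
  shows "weight (a + b, 2 * a + 3 * b) \<le> phi ^ 3 * rho * weight (a, b)"
proof -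
  have "phi ^ 3 * rho * weight (a, b) - weight (a + b, 2 * a + 3 * b)
      = ((phi - 1) * real b - real a) / sqrt 5"
    unfolding phi_cube unfolding weight_def rho_def phi_def by (simp add: field_simps)
  moreover have "((phi - 1) * real b - real a) / sqrt 5 \<ge> 0"
    using assms unfolding golden_iff by simp
  ultimately show ?thesis by linarith
qed

lemma weight_le_sqrt5_snd:
  assumes "golden p"
  shows "weight p \<le> sqrt 5 * real (snd p)"
  using assms unfolding golden_iff weight_def phi_def by (simp add: field_simps)

lemma golden_stern_pair_Nil: "golden (stern_pair [])"
  by (simp add: golden_def stern_pair_def)

lemma golden_stern_pair_append10:
  "golden (stern_pair u) \<Longrightarrow> golden (stern_pair (u @ [True, False]))"
  by (cases "stern_pair u") (simp add: stern_pair_append10 golden_step10)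

lemma golden_stern_pair_append100: "golden (stern_pair (u @ [True, False, False]))"
  by (cases "stern_pair u") (simp add: stern_pair_append100 golden_step100)

lemma weight_stern_pair_append10:
  "weight (stern_pair (u @ [True, False])) = phi ^ 2 * weight (stern_pair u)"
  by (cases "stern_pair u") (simp add: stern_pair_append10 weight_step10)

lemma weight_stern_pair_append100_le:
  "golden (stern_pair u) \<Longrightarrow>
    weight (stern_pair (u @ [True, False, False])) \<le> phi ^ 3 * rho * weight (stern_pair u)"
  by (cases "stern_pair u") (simp add: stern_pair_append100 weight_step100_le)

lemma golden_stern_pair_append_B:
  "y \<in> B \<Longrightarrow> golden (stern_pair u) \<Longrightarrow> golden (stern_pair (u @ y))"
  by (induction rule: B.induct)
    (simp_all add: golden_stern_pair_append10 golden_stern_pair_append100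
      flip: append_assoc)

lemma weight_stern_pair_append_B_le:
  assumes "y \<in> B" and "golden (stern_pair u)"
  shows "weight (stern_pair (u @ y))
    \<le> phi ^ length y * rho ^ nat (delta y) * weight (stern_pair u)"
  using assms
proof (induction rule: B.induct)
  case blk10
  then show ?case by (simp add: weight_stern_pair_append10 power2_eq_square)
next
  case blk100
  then show ?case
    using weight_stern_pair_append100_le[of u] by (simp add: power3_eq_cube mult.assoc)
next
  case (app10 x)
  have "weight (stern_pair (u @ x @ [True, False])) = phi ^ 2 * weight (stern_pair (u @ x))"
    by (simp add: weight_stern_pair_append10 flip: append_assoc)
  also have "\<dots> \<le> phi ^ 2 * (phi ^ length x * rho ^ nat (delta x) * weight (stern_pair u))"
    using app10 by (intro mult_left_mono) auto
  finally show ?case by (simp add: delta_append power_add power2_eq_square algebra_simps)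
next
  case (app100 x)
  have "weight (stern_pair (u @ x @ [True, False, False]))
      \<le> phi ^ 3 * rho * weight (stern_pair (u @ x))"
    using golden_stern_pair_append_B[OF app100.hyps app100.prems]
    by (simp add: weight_stern_pair_append100_le flip: append_assoc)
  also have "\<dots> \<le> phi ^ 3 * rho * (phi ^ length x * rho ^ nat (delta x) * weight (stern_pair u))"
    using app100 phi_pos rho_pos by (intro mult_left_mono) auto
  finally show ?case
    using delta_nonneg[OF app100.hyps]
    by (simp add: delta_append nat_add_distrib power_add power3_eq_cube algebra_simps)
qed

subsection \<open>Strings of smaller value with larger \<open>s\<close>\<close>

fun blocks10 :: "nat \<Rightarrow> bool list" where
  "blocks10 0 = []"
| "blocks10 (Suc m) = blocks10 m @ [True, False]"

lemma length_blocks10 [simp]: "length (blocks10 m) = 2 * m"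
  by (induction m) auto

lemma golden_stern_pair_append_blocks10:
  "golden (stern_pair u) \<Longrightarrow> golden (stern_pair (u @ blocks10 m))"
  by (induction m) (simp_all add: golden_stern_pair_append10 flip: append_assoc)

lemma weight_stern_pair_append_blocks10:
  "weight (stern_pair (u @ blocks10 m)) = phi ^ (2 * m) * weight (stern_pair u)"
  by (induction m)
    (simp_all add: weight_stern_pair_append10 power_add power2_eq_square flip: append_assoc)

lemma weight_ge_snd_stern_pair:
  assumes "x \<in> B" and "length x \<ge> 4"
  shows "(phi + 4 / 11) * real (snd (stern_pair x)) \<le> weight (stern_pair x)"
  using B_stern_pair_ratio[OF assms] unfolding weight_def by (simp add: algebra_simps)

lemma s_le_of_weight_le:
  assumes "x \<in> B" and "length x \<ge> 4" and "golden (stern_pair w)"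
    and "sqrt 5 * weight (stern_pair x) \<le> (phi + 4 / 11) * weight (stern_pair w)"
  shows "s (bin_val x) \<le> s (bin_val w)"
proof -
  have pos: "0 < (phi + 4 / 11) * sqrt 5" using phi_pos by simp
  have "(phi + 4 / 11) * sqrt 5 * real (s (bin_val x)) \<le> sqrt 5 * weight (stern_pair x)"
    using weight_ge_snd_stern_pair[OF assms(1,2)] by (simp add: stern_pair_eq)
  also have "\<dots> \<le> (phi + 4 / 11) * weight (stern_pair w)"
    by (fact assms(4))
  also have "\<dots> \<le> (phi + 4 / 11) * sqrt 5 * real (s (bin_val w))"
    using weight_le_sqrt5_snd[OF assms(3)] phi_pos
    by (simp add: stern_pair_eq mult.assoc mult_left_mono)
  finally show ?thesis using pos by (simp only: mult_le_cancel_left_pos of_nat_le_iff)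
qed

lemma numeric_bound_100: "16 / 25 * (phi ^ 4 - 1) * sqrt 5 \<le> (phi + 4 / 11) * phi ^ 3"
  unfolding phi_pow4 phi_cube unfolding phi_def using sqrt5_gt by (simp add: field_simps)

lemma numeric_bound_10: "32 / 25 * phi ^ 4 \<le> (phi + 4 / 11) * (phi ^ 4 - 1)"
proof -
  have sqrt5_twice: "sqrt 5 * (sqrt 5 * x) = 5 * x" for x :: real
    by (simp flip: mult.assoc)
  show ?thesis
    unfolding phi_pow4 unfolding phi_def using sqrt5_gt by (simp add: field_simps sqrt5_twice)
qed

lemma weight_stern_pair_small:
  "weight (stern_pair []) = phi"
  "weight (stern_pair [True, False]) = phi ^ 3"
  "weight (stern_pair [True, False, False]) = phi ^ 4 - 1"
  by (simp_all add: stern_pair_def stern_step_def weight_def phi_cube phi_pow4)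

lemma weight_stern_pair_B_le:
  assumes "y \<in> B" and "golden (stern_pair u)" and "int k \<le> delta y"
  shows "weight (stern_pair (u @ y)) \<le> phi ^ length y * rho ^ k * weight (stern_pair u)"
proof -
  have "rho ^ nat (delta y) \<le> rho ^ k"
    using assms(3) rho_pos rho_le_1 by (intro power_decreasing) auto
  moreover have "0 \<le> weight (stern_pair u)"
    unfolding weight_def using phi_pos by simp
  ultimately have "phi ^ length y * rho ^ nat (delta y) * weight (stern_pair u)
      \<le> phi ^ length y * rho ^ k * weight (stern_pair u)"
    using phi_pos by (intro mult_right_mono mult_left_mono) auto
  then show ?thesis
    using weight_stern_pair_append_B_le[OF assms(1,2)] by linarith
qed

lemma not_in_R_starting_100:
  assumes "x \<in> B" and "x = [True, False, False] @ y" and "y \<in> B"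
    and "length y = 2 * n + 6" and "delta y \<ge> 4"
  shows "bin_val x \<notin> R"
proof (rule not_in_R_if_dominated)
  define w where "w = blocks10 (n + 4)"
  have "bin_val w < 2 ^ (2 * n + 8)"
    using bin_val_less_power[of w] by (simp add: w_def)
  also have "\<dots> \<le> bin_val x"
  proof -
    have "bin_val [True, False, False] = 4" by (simp add: bin_val_def)
    then show ?thesis
      unfolding assms(2) bin_val_append using assms(4) by (simp add: power_add)
  qed
  finally show "bin_val w < bin_val x" .
  have "weight (stern_pair x) \<le> phi ^ (2 * n + 6) * rho ^ 4 * (phi ^ 4 - 1)"
    using weight_stern_pair_B_le[OF assms(3) golden_stern_pair_append100[of "[]"], of 4] assms
    by (simp add: weight_stern_pair_small)
  then have "sqrt 5 * weight (stern_pair x)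
      \<le> sqrt 5 * (phi ^ (2 * n + 6) * rho ^ 4 * (phi ^ 4 - 1))"
    by simp
  also have "\<dots> = phi ^ (2 * n + 6) * (16 / 25 * (phi ^ 4 - 1) * sqrt 5)"
    unfolding rho_pow4 by simp
  also have "\<dots> \<le> phi ^ (2 * n + 6) * ((phi + 4 / 11) * phi ^ 3)"
    using numeric_bound_100 phi_pos by (intro mult_left_mono) auto
  also have "\<dots> = (phi + 4 / 11) * weight (stern_pair w)"
  proof -
    have "phi ^ (2 * n + 6) * phi ^ 3 = phi ^ (2 * (n + 4)) * phi"
      by (simp flip: power_add power_Suc2)
    then show ?thesis
      using weight_stern_pair_append_blocks10[of "[]" "n + 4"]
      by (simp add: w_def weight_stern_pair_small)
  qed
  finally show "s (bin_val x) \<le> s (bin_val w)"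
    using assms(1,2,4) golden_stern_pair_append_blocks10[OF golden_stern_pair_Nil]
    by (intro s_le_of_weight_le) (simp_all add: w_def)
qed

lemma not_in_R_starting_10:
  assumes "x \<in> B" and "x = [True, False] @ y" and "y \<in> B"
    and "length y = 2 * n + 7" and "delta y \<ge> 5"
  shows "bin_val x \<notin> R"
proof (rule not_in_R_if_dominated)
  define w where "w = [True, False, False] @ blocks10 (n + 3)"
  obtain v where v: "y = True # v" using B_Cons_True[OF assms(3)] by blast
  have "bin_val w = 4 * 2 ^ (2 * n + 6) + bin_val (blocks10 (n + 3))"
    unfolding w_def bin_val_append by (simp add: bin_val_def)
  also have "\<dots> < 5 * 2 ^ (2 * n + 6)"
    using bin_val_less_power[of "blocks10 (n + 3)"] by simp
  also have "\<dots> \<le> bin_val x"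
  proof -
    have "x = [True, False, True] @ v" "bin_val [True, False, True] = 5"
      using assms(2) v by (simp_all add: bin_val_def)
    then show ?thesis
      using bin_val_append[of "[True, False, True]" v] assms(4) v by (simp add: ac_simps)
  qed
  finally show "bin_val w < bin_val x" .
  have "golden (stern_pair [True, False])"
    using golden_stern_pair_append10[OF golden_stern_pair_Nil] by simp
  then have "weight (stern_pair x) \<le> phi ^ (2 * n + 7) * rho ^ 5 * phi ^ 3"
    using weight_stern_pair_B_le[OF assms(3), of "[True, False]" 5] assms
    by (simp add: weight_stern_pair_small)
  then have "sqrt 5 * weight (stern_pair x)
      \<le> sqrt 5 * (phi ^ (2 * n + 7) * rho ^ 5 * phi ^ 3)"
    by simp
  also have "\<dots> = (sqrt 5 * rho ^ 5) * (phi ^ (2 * n + 7) * phi ^ 3)"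
    by (simp only: ac_simps)
  also have "\<dots> = phi ^ (2 * n + 6) * (32 / 25 * phi ^ 4)"
  proof -
    have "rho ^ 5 = rho ^ 4 * rho"
      using power_add[of rho 4 1] by simp
    then have "sqrt 5 * rho ^ 5 = 32 / 25"
      unfolding rho_pow4 using sqrt5_mult_rho by (simp add: ac_simps)
    moreover have "phi ^ (2 * n + 7) * phi ^ 3 = phi ^ (2 * n + 6) * phi ^ 4"
      by (simp flip: power_add)
    ultimately show ?thesis by simp
  qed
  also have "\<dots> \<le> phi ^ (2 * n + 6) * ((phi + 4 / 11) * (phi ^ 4 - 1))"
    using numeric_bound_10 phi_pos by (intro mult_left_mono) auto
  also have "\<dots> = (phi + 4 / 11) * weight (stern_pair w)"
    using weight_stern_pair_append_blocks10[of "[True, False, False]" "n + 3"]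
    by (simp add: w_def weight_stern_pair_small)
  finally show "s (bin_val x) \<le> s (bin_val w)"
    using assms(1,2,4) golden_stern_pair_append_blocks10[OF golden_stern_pair_append100[of "[]"]]
    by (intro s_le_of_weight_le) (simp_all add: w_def)
qed

theorem mainTheorem14:
  fixes n :: nat and x :: "bool list"
  assumes "n \<ge> 3" and "x \<in> B" and "length x = 2 * n + 9" and "delta x \<ge> 5"
  shows "bin_val x \<notin> R"
  \<comment> \<open>The argument works for every \<open>n\<close>.\<close>
  using assms(2)
proof (cases rule: B_split_first_block)
  case (3 y)
  then show ?thesis
    using assms(2-4) delta_append[of "[True, False]" y]
    by (intro not_in_R_starting_10[of x y n]) simp_all
next
  case (4 y)
  then show ?thesis
    using assms(2-4) delta_append[of "[True, False, False]" y]
    by (intro not_in_R_starting_100[of x y n]) simp_all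
qed (use assms(3) in auto)

end
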